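(* Let $f_n=[\psi_1,\psi_1^*]\cdots[\psi_n,\psi_n^*]\in\mathrm{Cl}_q(n,k)$, where $[A,B]=AB-BA$, and let $\mathrm{Cl}_q^+(n,k)$ be the subalgebra generated by the elements of even degree for the $\mathbb{Z}_2$-grading. Let $\pi\colon\mathrm{Cl}_q(n,k)\to\mathrm{End}(W)$ be an irreducible representation. Then $W=W^+\oplus W^-$ with $W^\pm=(1\pm\pi(f_n))(W)$, and each $W^\pm$ is invariant under $\mathrm{Cl}_q^+(n,k)$.
   Context: Let $\mathbb{k}$ be a field of characteristic different from $2$, let $q\in\mathbb{k}^\times$, and let $n,k$ be positive integers. The quantum Clifford algebra $\mathrm{Cl}_q(n,k)$ is the unital associative $\mathbb{k}$-algebra generated by $\psi_a,\psi_a^*,\omega_a,\omega_a^{-1}$ for $a\in\{1,\dots,n\}$, subject to the relations (for all $a,b\in\{1,\dots,n\}$): $\omega_a\omega_b=\omega_b\omega_a$; $\omega_a\omega_a^{-1}=1$; $\omega_a\psi_b=q^{\delta_{ab}}\psi_b\omega_a$; $\omega_a\psi_b^*=q^{-\delta_{ab}}\psi_b^*\omega_a$; $\psi_a\psi_b+\psi_b\psi_a=0$; $\psi_a^*\psi_b^*+\psi_b^*\psi_a^*=0$; $\psi_a\psi_a^*+q^k\psi_a^*\psi_a=\omega_a^{-k}$; $\psi_a\psi_a^*+q^{-k}\psi_a^*\psi_a=\omega_a^{k}$; and $\psi_a\psi_b^*+\psi_b^*\psi_a=0$ if $a\neq b$. The $\mathbb{Z}_2$-grading (superalgebra structure) is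 given by declaring $\psi_a,\psi_a^*$ odd and $\omega_a^{\pm1}$ even. *)

theory Defs
  imports Complex_Main
begin

text \<open>Expressions in the generators of the quantum Clifford algebra Cl_q(n,k)
  (elements of the free algebra); the algebra is their image modulo the relations.
  A representation pi of Cl_q(n,k) on W is, by the universal property of the
  presented algebra, the same as operators on W satisfying the defining relations;
  pi of an expression is its evaluation.\<close>

datatype 'k clexpr =
    GPsi nat | GPsiS nat | GOm nat | GOmInv nat
  | COne | CScal 'k "'k clexpr" | CAdd "'k clexpr" "'k clexpr" | CMul "'k clexpr" "'k clexpr"

inductive cl_expr :: "nat \<Rightarrow> 'k clexpr \<Rightarrow> bool" for n where
  "a \<in> {1..n} \<Longrightarrow> cl_expr n (GPsi a)"
| "a \<in> {1..n} \<Longrightarrow> cl_expr n (GPsiS a)"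
| "a \<in> {1..n} \<Longrightarrow> cl_expr n (GOm a)"
| "a \<in> {1..n} \<Longrightarrow> cl_expr n (GOmInv a)"
| "cl_expr n COne"
| "cl_expr n e \<Longrightarrow> cl_expr n (CScal c e)"
| "cl_expr n e1 \<Longrightarrow> cl_expr n e2 \<Longrightarrow> cl_expr n (CAdd e1 e2)"
| "cl_expr n e1 \<Longrightarrow> cl_expr n e2 \<Longrightarrow> cl_expr n (CMul e1 e2)"

text \<open>The elements of even degree of Cl_q(n,k) are exactly the images of the even
  expressions, and these already form a subalgebra, so Cl_q^+(n,k) is their image.\<close>
inductive cl_even :: "nat \<Rightarrow> 'k clexpr \<Rightarrow> bool" and cl_odd :: "nat \<Rightarrow> 'k clexpr \<Rightarrow> bool"
  for n where
  "a \<in> {1..n} \<Longrightarrow> cl_odd n (GPsi a)"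
| "a \<in> {1..n} \<Longrightarrow> cl_odd n (GPsiS a)"
| "a \<in> {1..n} \<Longrightarrow> cl_even n (GOm a)"
| "a \<in> {1..n} \<Longrightarrow> cl_even n (GOmInv a)"
| "cl_even n COne"
| "cl_even n e \<Longrightarrow> cl_even n (CScal c e)"
| "cl_odd n e \<Longrightarrow> cl_odd n (CScal c e)"
| "cl_even n e1 \<Longrightarrow> cl_even n e2 \<Longrightarrow> cl_even n (CAdd e1 e2)"
| "cl_odd n e1 \<Longrightarrow> cl_odd n e2 \<Longrightarrow> cl_odd n (CAdd e1 e2)"
| "cl_even n e1 \<Longrightarrow> cl_even n e2 \<Longrightarrow> cl_even n (CMul e1 e2)"
| "cl_odd n e1 \<Longrightarrow> cl_odd n e2 \<Longrightarrow> cl_even n (CMul e1 e2)"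
| "cl_even n e1 \<Longrightarrow> cl_odd n e2 \<Longrightarrow> cl_odd n (CMul e1 e2)"
| "cl_odd n e1 \<Longrightarrow> cl_even n e2 \<Longrightarrow> cl_odd n (CMul e1 e2)"

fun cl_eval :: "('k \<Rightarrow> 'v \<Rightarrow> 'v) \<Rightarrow> (nat \<Rightarrow> 'v \<Rightarrow> 'v) \<Rightarrow> (nat \<Rightarrow> 'v \<Rightarrow> 'v)
    \<Rightarrow> (nat \<Rightarrow> 'v \<Rightarrow> 'v) \<Rightarrow> (nat \<Rightarrow> 'v \<Rightarrow> 'v) \<Rightarrow> 'k clexpr \<Rightarrow> ('v::ab_group_add \<Rightarrow> 'v)" where
  "cl_eval sc Psi PsiS Om OmI (GPsi a) = Psi a"
| "cl_eval sc Psi PsiS Om OmI (GPsiS a) = PsiS a"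
| "cl_eval sc Psi PsiS Om OmI (GOm a) = Om a"
| "cl_eval sc Psi PsiS Om OmI (GOmInv a) = OmI a"
| "cl_eval sc Psi PsiS Om OmI COne = id"
| "cl_eval sc Psi PsiS Om OmI (CScal c e) = (\<lambda>v. sc c (cl_eval sc Psi PsiS Om OmI e v))"
| "cl_eval sc Psi PsiS Om OmI (CAdd e1 e2) =
     (\<lambda>v. cl_eval sc Psi PsiS Om OmI e1 v + cl_eval sc Psi PsiS Om OmI e2 v)"
| "cl_eval sc Psi PsiS Om OmI (CMul e1 e2) =
     cl_eval sc Psi PsiS Om OmI e1 \<circ> cl_eval sc Psi PsiS Om OmI e2"

definition qcl_rep ::
  "('k::field \<Rightarrow> 'v::ab_group_add \<Rightarrow> 'v) \<Rightarrow> 'k \<Rightarrow> nat \<Rightarrow> nat \<Rightarrow> (nat \<Rightarrow> 'v \<Rightarrow> 'v)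
    \<Rightarrow> (nat \<Rightarrow> 'v \<Rightarrow> 'v) \<Rightarrow> (nat \<Rightarrow> 'v \<Rightarrow> 'v) \<Rightarrow> (nat \<Rightarrow> 'v \<Rightarrow> 'v) \<Rightarrow> bool" where
  "qcl_rep sc q n k Psi PsiS Om OmI \<longleftrightarrow>
     Vector_Spaces.vector_space sc \<and>
     (\<forall>a\<in>{1..n}. Vector_Spaces.linear sc sc (Psi a) \<and> Vector_Spaces.linear sc sc (PsiS a)
        \<and> Vector_Spaces.linear sc sc (Om a) \<and> Vector_Spaces.linear sc sc (OmI a)) \<and>
     (\<forall>a\<in>{1..n}. \<forall>b\<in>{1..n}. \<forall>v.
        Om a (Om b v) = Om b (Om a v)
      \<and> Om a (OmI a v) = v \<and> OmI a (Om a v) = v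
      \<and> Om a (Psi b v) = sc (if a = b then q else 1) (Psi b (Om a v))
      \<and> Om a (PsiS b v) = sc (if a = b then inverse q else 1) (PsiS b (Om a v))
      \<and> Psi a (Psi b v) + Psi b (Psi a v) = 0
      \<and> PsiS a (PsiS b v) + PsiS b (PsiS a v) = 0
      \<and> Psi a (PsiS a v) + sc (q ^ k) (PsiS a (Psi a v)) = (OmI a ^^ k) v
      \<and> Psi a (PsiS a v) + sc (inverse q ^ k) (PsiS a (Psi a v)) = (Om a ^^ k) v
      \<and> (a \<noteq> b \<longrightarrow> Psi a (PsiS b v) + PsiS b (Psi a v) = 0))"

definition qcl_irreducible ::
  "('k::field \<Rightarrow> 'v::ab_group_add \<Rightarrow> 'v) \<Rightarrow> nat \<Rightarrow> (nat \<Rightarrow> 'v \<Rightarrow> 'v)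
    \<Rightarrow> (nat \<Rightarrow> 'v \<Rightarrow> 'v) \<Rightarrow> (nat \<Rightarrow> 'v \<Rightarrow> 'v) \<Rightarrow> (nat \<Rightarrow> 'v \<Rightarrow> 'v) \<Rightarrow> bool" where
  "qcl_irreducible sc n Psi PsiS Om OmI \<longleftrightarrow>
     (\<exists>v::'v. v \<noteq> 0) \<and>
     (\<forall>U. Modules.module.subspace sc U \<and>
          (\<forall>e. cl_expr n e \<longrightarrow> cl_eval sc Psi PsiS Om OmI e ` U \<subseteq> U)
        \<longrightarrow> U = {0} \<or> U = UNIV)"

definition op_comm :: "('v::ab_group_add \<Rightarrow> 'v) \<Rightarrow> ('v \<Rightarrow> 'v) \<Rightarrow> 'v \<Rightarrow> 'v" where
  "op_comm A B = (\<lambda>v. A (B v) - B (A v))"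

definition qcl_fn :: "nat \<Rightarrow> (nat \<Rightarrow> 'v::ab_group_add \<Rightarrow> 'v) \<Rightarrow> (nat \<Rightarrow> 'v \<Rightarrow> 'v) \<Rightarrow> 'v \<Rightarrow> 'v" where
  "qcl_fn n Psi PsiS = foldr (\<lambda>a acc. op_comm (Psi a) (PsiS a) \<circ> acc) [1..<Suc n] id"

end

theory Submission
  imports Defs
begin

text \<open>Put \<open>F\<^sub>a = [\<psi>\<^sub>a, \<psi>\<^sub>a\<^sup>*]\<close>. Since \<open>\<psi>\<^sub>a\<^sup>2 = \<psi>\<^sub>a\<^sup>*\<^sup>2 = 0\<close> (characteristic \<open>\<noteq> 2\<close>), the two
  relations for \<open>\<psi>\<^sub>a\<psi>\<^sub>a\<^sup>*\<close> give \<open>F\<^sub>a\<^sup>2 = \<omega>\<^sub>a\<^sup>-\<^sup>k(\<psi>\<^sub>a\<psi>\<^sub>a\<^sup>* + q\<^sup>-\<^sup>k\<psi>\<^sub>a\<^sup>*\<psi>\<^sub>a) = \<omega>\<^sub>a\<^sup>-\<^sup>k\<omega>\<^sub>a\<^sup>k = 1\<close>.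
  \<open>F\<^sub>a\<close> anticommutes with \<open>\<psi>\<^sub>a, \<psi>\<^sub>a\<^sup>*\<close> and commutes with all other generators, in
  particular with every \<open>F\<^sub>b\<close>; so \<open>f\<^sub>n = F\<^sub>1\<cdots>F\<^sub>n\<close> is an involution that commutes with every
  even element. The images of \<open>1 \<plusminus> \<pi>(f\<^sub>n)\<close> are then its \<open>\<plusminus>1\<close>-eigenspaces, which split \<open>W\<close>
  and are preserved by everything commuting with \<open>\<pi>(f\<^sub>n)\<close>.\<close>

lemma funpow_left_inverse:
  fixes f g :: "'a \<Rightarrow> 'a"
  assumes "\<And>x. g (f x) = x"
  shows "(g ^^ n) ((f ^^ n) x) = x"
proof (induction n arbitrary: x)
  case (Suc n)
  have "(g ^^ Suc n) ((f ^^ Suc n) x) = g ((g ^^ n) ((f ^^ n) (f x)))"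
    by (simp add: funpow_swap1[of f n x])
  then show ?case
    using Suc assms by simp
qed simp

lemma linear_imp_additive:
  assumes "Vector_Spaces.linear s1 s2 f"
  shows "additive f"
proof -
  interpret Vector_Spaces.linear s1 s2 f
    by (fact assms)
  show ?thesis
    by unfold_locales (rule add)
qed

lemma op_comm_commute:
  assumes "additive X" "\<And>v. X (A v) = A (X v)" "\<And>v. X (B v) = B (X v)"
  shows "X (op_comm A B v) = op_comm A B (X v)"
  using assms by (simp add: op_comm_def additive.diff)

lemma op_comm_commute_if_anticommute:
  assumes "additive X" "additive A" "additive B"
    and "\<And>v. X (A v) = - A (X v)" "\<And>v. X (B v) = - B (X v)"
  shows "X (op_comm A B v) = op_comm A B (X v)"
  using assms by (simp add: op_comm_def additive.diff additive.minus)

lemma linear_funpow: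
  assumes "vector_space s" "Vector_Spaces.linear s s f"
  shows "Vector_Spaces.linear s s (f ^^ n)"
proof (induction n)
  case 0
  show ?case
    using vector_space.linear_ident[OF assms(1)] by (simp add: id_def)
next
  case (Suc n)
  then show ?case
    using assms(2) by (simp only: funpow.simps(2) Vector_Spaces.linear_compose)
qed

definition comp_prod :: "('i \<Rightarrow> 'a \<Rightarrow> 'a) \<Rightarrow> 'i list \<Rightarrow> 'a \<Rightarrow> 'a" where
  "comp_prod f xs = foldr (\<lambda>a acc. f a \<circ> acc) xs id"

lemma comp_prod_simps [simp]:
  "comp_prod f [] = id" "comp_prod f (a # xs) = f a \<circ> comp_prod f xs"
  by (simp_all add: comp_prod_def)

lemma linear_comp_prod:
  assumes "vector_space s" "\<And>a. a \<in> set xs \<Longrightarrow> Vector_Spaces.linear s s (f a)"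
  shows "Vector_Spaces.linear s s (comp_prod f xs)"
  using assms(2)
proof (induction xs)
  case Nil
  show ?case
    using vector_space.linear_ident[OF assms(1)] by (simp add: id_def)
next
  case (Cons a xs)
  then show ?case
    unfolding comp_prod_simps by (intro Vector_Spaces.linear_compose) auto
qed

lemma comp_prod_commute:
  assumes "\<And>a v. a \<in> set xs \<Longrightarrow> X (f a v) = f a (X v)"
  shows "X (comp_prod f xs v) = comp_prod f xs (X v)"
  using assms by (induction xs arbitrary: v) simp_all

lemma comp_prod_anticommute:
  fixes f :: "'i \<Rightarrow> 'a::ab_group_add \<Rightarrow> 'a"
  assumes "distinct xs" "b \<in> set xs"
    and "\<And>a. a \<in> set xs \<Longrightarrow> additive (f a)"
    and "\<And>v. X (f b v) = - f b (X v)"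
    and "\<And>a v. a \<in> set xs \<Longrightarrow> a \<noteq> b \<Longrightarrow> X (f a v) = f a (X v)"
  shows "X (comp_prod f xs v) = - comp_prod f xs (X v)"
  using assms
proof (induction xs arbitrary: v)
  case Nil
  then show ?case by simp
next
  case (Cons a xs)
  show ?case
  proof (cases "a = b")
    case True
    with Cons.prems have "X (comp_prod f xs u) = comp_prod f xs (X u)" for u
      by (intro comp_prod_commute) auto
    with True Cons.prems show ?thesis
      by simp
  next
    case False
    with Cons have IH: "X (comp_prod f xs u) = - comp_prod f xs (X u)" for u
      by simp
    have "additive (f a)"
      using Cons.prems(3) by simp
    with False Cons.prems IH show ?thesis
      by (simp add: additive.minus)
  qed
qed

lemma comp_prod_involutive:
  assumes "distinct xs"
    and "\<And>a v. a \<in> set xs \<Longrightarrow> f a (f a v) = v"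
    and "\<And>a b v. a \<in> set xs \<Longrightarrow> b \<in> set xs \<Longrightarrow> a \<noteq> b \<Longrightarrow> f a (f b v) = f b (f a v)"
  shows "comp_prod f xs (comp_prod f xs v) = v"
  using assms
proof (induction xs arbitrary: v)
  case Nil
  then show ?case by simp
next
  case (Cons a xs)
  then have "comp_prod f xs (f a u) = f a (comp_prod f xs u)" for u
    by (intro comp_prod_commute[symmetric]) (metis list.set_intros)
  with Cons show ?case
    by simp
qed

lemma (in vector_space) op_comm_commute_if_rescaled:
  assumes "additive X" "c * d = 1"
    and "\<And>c v. A (scale c v) = scale c (A v)" "\<And>c v. B (scale c v) = scale c (B v)"
    and "\<And>v. X (A v) = scale c (A (X v))" "\<And>v. X (B v) = scale d (B (X v))"
  shows "X (op_comm A B v) = op_comm A B (X v)"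
  using assms by (simp add: op_comm_def additive.diff mult.commute)

lemma (in vector_space) double_eq_0_imp_eq_0:
  fixes x :: 'b
  assumes "(2::'a) \<noteq> 0" "x + x = 0"
  shows "x = 0"
proof -
  have "x = scale (inverse 2) (scale 2 x)"
    using assms(1) by simp
  also have "scale 2 x = x + x"
    by (metis one_add_one scale_left_distrib scale_one)
  finally show ?thesis
    using assms(2) by simp
qed

lemma (in vector_space) ranges_plus_minus_sum:
  fixes F :: "'b \<Rightarrow> 'b"
  assumes "(2::'a) \<noteq> 0"
  shows "\<exists>x\<in>range (\<lambda>v. v + F v). \<exists>y\<in>range (\<lambda>v. v - F v). w = x + y"
proof -
  define h where "h = scale (inverse 2) w"
  have "h + h = scale (inverse 2 + inverse 2) w"
    by (simp only: h_def scale_left_distrib)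
  also have "inverse 2 + inverse 2 = (1::'a)"
    using assms by (metis mult_2 right_inverse)
  finally have "w = (h + F h) + (h - F h)"
    by simp
  then show ?thesis
    by blast
qed

lemma (in vector_space) involution_ranges_inter:
  fixes F :: "'b \<Rightarrow> 'b"
  assumes "(2::'a) \<noteq> 0" "additive F" "\<And>v. F (F v) = v"
  shows "range (\<lambda>v. v + F v) \<inter> range (\<lambda>v. v - F v) = {0}"
proof (intro equalityI subsetI)
  fix x :: 'b
  assume "x \<in> range (\<lambda>v. v + F v) \<inter> range (\<lambda>v. v - F v)"
  then obtain u v where u: "x = u + F u" and v: "x = v - F v"
    by blast
  have "F x = x"
    using u assms(2,3) by (simp add: additive.add add.commute)
  moreover have "F x = - x"
    using v assms(2,3) by (simp add: additive.diff)
  ultimately have "x + x = 0"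
    by (metis add.right_inverse)
  then show "x \<in> {0}"
    using double_eq_0_imp_eq_0[OF assms(1)] by blast
next
  fix x :: 'b
  assume "x \<in> {0}"
  then have "x = 0 + F 0" "x = 0 - F 0"
    using assms(2) by (simp_all add: additive.zero)
  then show "x \<in> range (\<lambda>v. v + F v) \<inter> range (\<lambda>v. v - F v)"
    by blast
qed

lemma commuting_map_preserves_ranges:
  fixes E F :: "'a::ab_group_add \<Rightarrow> 'a"
  assumes "additive E" "\<And>v. E (F v) = F (E v)"
  shows "E ` range (\<lambda>v. v + F v) \<subseteq> range (\<lambda>v. v + F v)"
    and "E ` range (\<lambda>v. v - F v) \<subseteq> range (\<lambda>v. v - F v)"
  using assms by (auto simp: additive.add additive.diff)

locale qcl_representation =
  fixes sc :: "'k::field \<Rightarrow> 'v::ab_group_add \<Rightarrow> 'v" and q :: 'k and n k :: nat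
    and Psi PsiS Om OmI :: "nat \<Rightarrow> 'v \<Rightarrow> 'v"
  assumes rep: "qcl_rep sc q n k Psi PsiS Om OmI"
    and char_not_2: "(2::'k) \<noteq> 0"
    and q_nonzero: "q \<noteq> 0"
begin

sublocale V: vector_space sc
  using rep by (simp add: qcl_rep_def)

sublocale VP: vector_space_pair sc sc ..

abbreviation \<pi> :: "'k clexpr \<Rightarrow> 'v \<Rightarrow> 'v" where
  "\<pi> \<equiv> cl_eval sc Psi PsiS Om OmI"

lemma linear_generators:
  assumes "a \<in> {1..n}"
  shows "Vector_Spaces.linear sc sc (Psi a)" "Vector_Spaces.linear sc sc (PsiS a)"
    "Vector_Spaces.linear sc sc (Om a)" "Vector_Spaces.linear sc sc (OmI a)"
  using rep assms by (simp_all add: qcl_rep_def)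

lemmas generator_linear_simps =
  linear_generators[THEN VP.linear_add] linear_generators[THEN VP.linear_scale]
  linear_generators[THEN VP.linear_0] linear_generators[THEN VP.linear_neg]
  linear_generators[THEN VP.linear_diff]

lemma qcl_relations:
  assumes "a \<in> {1..n}" "b \<in> {1..n}"
  shows "Om a (Om b v) = Om b (Om a v)"
    "Om a (OmI a v) = v" "OmI a (Om a v) = v"
    "Om a (Psi b v) = sc (if a = b then q else 1) (Psi b (Om a v))"
    "Om a (PsiS b v) = sc (if a = b then inverse q else 1) (PsiS b (Om a v))"
    "Psi a (Psi b v) + Psi b (Psi a v) = 0"
    "PsiS a (PsiS b v) + PsiS b (PsiS a v) = 0"
    "Psi a (PsiS a v) + sc (q ^ k) (PsiS a (Psi a v)) = (OmI a ^^ k) v"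
    "Psi a (PsiS a v) + sc (inverse q ^ k) (PsiS a (Psi a v)) = (Om a ^^ k) v"
    "a \<noteq> b \<Longrightarrow> Psi a (PsiS b v) + PsiS b (Psi a v) = 0"
  using rep assms unfolding qcl_rep_def by blast+

lemma Psi_Psi_eq_0: "a \<in> {1..n} \<Longrightarrow> Psi a (Psi a v) = 0"
  using qcl_relations(6)[of a a v] V.double_eq_0_imp_eq_0 char_not_2 by blast

lemma PsiS_PsiS_eq_0: "a \<in> {1..n} \<Longrightarrow> PsiS a (PsiS a v) = 0"
  using qcl_relations(7)[of a a v] V.double_eq_0_imp_eq_0 char_not_2 by blast

lemma Psi_PsiS_Psi:
  assumes "a \<in> {1..n}"
  shows "Psi a (PsiS a (Psi a v)) = (OmI a ^^ k) (Psi a v)"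
  using qcl_relations(8)[OF assms assms, of "Psi a v"] Psi_Psi_eq_0 generator_linear_simps assms
  by simp

lemma PsiS_OmI_pow:
  assumes a: "a \<in> {1..n}"
  shows "PsiS a ((OmI a ^^ j) v) = sc (inverse q ^ j) ((OmI a ^^ j) (PsiS a v))"
proof (induction j)
  case (Suc j)
  have "Om a (PsiS a (OmI a u)) = sc (inverse q) (PsiS a u)" for u
    using qcl_relations(2,5)[OF a a] by simp
  then have "PsiS a (OmI a u) = sc (inverse q) (OmI a (PsiS a u))" for u
    using qcl_relations(3)[OF a a] generator_linear_simps a by (metis (no_types))
  with Suc show ?case
    using generator_linear_simps a by simp
qed simp

definition psi_comm :: "nat \<Rightarrow> 'v \<Rightarrow> 'v" where
  "psi_comm a = op_comm (Psi a) (PsiS a)"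

lemma linear_psi_comm:
  assumes "a \<in> {1..n}"
  shows "Vector_Spaces.linear sc sc (psi_comm a)"
proof -
  have "Vector_Spaces.linear sc sc (Psi a \<circ> PsiS a)" "Vector_Spaces.linear sc sc (PsiS a \<circ> Psi a)"
    using linear_generators[OF assms] by (simp_all add: Vector_Spaces.linear_compose)
  from VP.linear_compose_sub[OF this] show ?thesis
    by (simp add: psi_comm_def op_comm_def comp_def)
qed

lemma psi_comm_involutive:
  assumes a: "a \<in> {1..n}"
  shows "psi_comm a (psi_comm a v) = v"
proof -
  let ?I = "OmI a ^^ k"
  have lin_I: "Vector_Spaces.linear sc sc ?I"
    using linear_generators(4)[OF a] V.vector_space_axioms by (rule linear_funpow[rotated])
  have "psi_comm a (psi_comm a v)
      = Psi a (PsiS a (Psi a (PsiS a v))) + PsiS a (Psi a (PsiS a (Psi a v)))"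
    unfolding psi_comm_def op_comm_def
    using Psi_Psi_eq_0 PsiS_PsiS_eq_0 generator_linear_simps a by simp
  also have "\<dots> = ?I (Psi a (PsiS a v)) + PsiS a (?I (Psi a v))"
    using Psi_PsiS_Psi a by simp
  also have "\<dots> = ?I (Psi a (PsiS a v) + sc (inverse q ^ k) (PsiS a (Psi a v)))"
    using PsiS_OmI_pow a VP.linear_add[OF lin_I] VP.linear_scale[OF lin_I] by simp
  also have "\<dots> = v"
    using qcl_relations(9)[OF a a] funpow_left_inverse[of "OmI a" "Om a"] qcl_relations(3)[OF a a]
    by simp
  finally show ?thesis .
qed

lemma odd_generators_anticommute:
  assumes "a \<in> {1..n}" "b \<in> {1..n}"
  shows "Psi b (Psi a v) = - Psi a (Psi b v)" "PsiS b (PsiS a v) = - PsiS a (PsiS b v)"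
    and "a \<noteq> b \<Longrightarrow> Psi b (PsiS a v) = - PsiS a (Psi b v)"
    and "a \<noteq> b \<Longrightarrow> PsiS b (Psi a v) = - Psi a (PsiS b v)"
  using qcl_relations(6,7)[OF assms(2,1)] qcl_relations(10)[OF assms(2,1)]
    qcl_relations(10)[OF assms] by (simp_all add: eq_neg_iff_add_eq_0 add.commute)

lemma additive_generators:
  assumes "a \<in> {1..n}"
  shows "additive (Psi a)" "additive (PsiS a)"
  using linear_generators[OF assms] by (simp_all add: linear_imp_additive)

lemma Psi_psi_comm:
  assumes "a \<in> {1..n}" "b \<in> {1..n}"
  shows "Psi b (psi_comm a v) = (if a = b then - psi_comm a (Psi b v) else psi_comm a (Psi b v))"
proof (cases "a = b")
  case True
  then show ?thesis
    unfolding psi_comm_def op_comm_def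
    using assms generator_linear_simps Psi_Psi_eq_0 by simp
next
  case False
  have "Psi b (op_comm (Psi a) (PsiS a) v) = op_comm (Psi a) (PsiS a) (Psi b v)"
    by (rule op_comm_commute_if_anticommute)
      (use False assms additive_generators odd_generators_anticommute[OF assms] in simp_all)
  with False show ?thesis
    by (simp add: psi_comm_def)
qed

lemma PsiS_psi_comm:
  assumes "a \<in> {1..n}" "b \<in> {1..n}"
  shows "PsiS b (psi_comm a v) = (if a = b then - psi_comm a (PsiS b v) else psi_comm a (PsiS b v))"
proof (cases "a = b")
  case True
  then show ?thesis
    unfolding psi_comm_def op_comm_def
    using assms generator_linear_simps PsiS_PsiS_eq_0 by simp
next
  case False
  have "PsiS b (op_comm (Psi a) (PsiS a) v) = op_comm (Psi a) (PsiS a) (PsiS b v)"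
    by (rule op_comm_commute_if_anticommute)
      (use False assms additive_generators odd_generators_anticommute[OF assms] in simp_all)
  with False show ?thesis
    by (simp add: psi_comm_def)
qed

lemma Om_psi_comm:
  assumes "a \<in> {1..n}" "b \<in> {1..n}"
  shows "Om b (psi_comm a v) = psi_comm a (Om b v)"
  unfolding psi_comm_def
proof (rule V.op_comm_commute_if_rescaled)
  show "additive (Om b)"
    using linear_generators(3)[OF assms(2)] by (rule linear_imp_additive)
  show "(if b = a then q else 1) * (if b = a then inverse q else 1) = 1"
    using q_nonzero by simp
qed (use assms qcl_relations(4,5) generator_linear_simps in simp_all)

lemma OmI_psi_comm:
  assumes "a \<in> {1..n}" "b \<in> {1..n}"
  shows "OmI b (psi_comm a v) = psi_comm a (OmI b v)"
proof -
  have "OmI b (psi_comm a v) = OmI b (psi_comm a (Om b (OmI b v)))"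
    using qcl_relations(2)[OF assms(2,2)] by simp
  also have "\<dots> = psi_comm a (OmI b v)"
    using Om_psi_comm[OF assms, symmetric] qcl_relations(3)[OF assms(2,2)] by simp
  finally show ?thesis .
qed

lemma psi_comm_commute:
  assumes "a \<in> {1..n}" "b \<in> {1..n}" "a \<noteq> b"
  shows "psi_comm a (psi_comm b v) = psi_comm b (psi_comm a v)"
  unfolding psi_comm_def[of b]
proof (rule op_comm_commute)
  show "additive (psi_comm a)"
    using linear_psi_comm[OF assms(1)] by (rule linear_imp_additive)
  show "psi_comm a (Psi b v) = Psi b (psi_comm a v)"
    and "psi_comm a (PsiS b v) = PsiS b (psi_comm a v)" for v
    using Psi_psi_comm[OF assms(1,2)] PsiS_psi_comm[OF assms(1,2)] assms(3) by simp_all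
qed

abbreviation f_n :: "'v \<Rightarrow> 'v" where
  "f_n \<equiv> qcl_fn n Psi PsiS"

lemma f_n_eq_comp_prod: "f_n = comp_prod psi_comm [1..<Suc n]"
  unfolding qcl_fn_def comp_prod_def psi_comm_def ..

lemma linear_f_n: "Vector_Spaces.linear sc sc f_n"
  unfolding f_n_eq_comp_prod
  using V.vector_space_axioms linear_psi_comm by (rule linear_comp_prod) (simp del: upt_Suc)

lemma f_n_involutive: "f_n (f_n v) = v"
  unfolding f_n_eq_comp_prod
  by (rule comp_prod_involutive) (auto simp del: upt_Suc intro: psi_comm_involutive psi_comm_commute)

lemma generators_f_n:
  assumes "a \<in> {1..n}"
  shows "Psi a (f_n v) = - f_n (Psi a v)" "PsiS a (f_n v) = - f_n (PsiS a v)"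
    "Om a (f_n v) = f_n (Om a v)" "OmI a (f_n v) = f_n (OmI a v)"
proof -
  have additive: "additive (psi_comm b)" if "b \<in> {1..n}" for b
    using linear_psi_comm[OF that] by (rule linear_imp_additive)
  show "Psi a (f_n v) = - f_n (Psi a v)"
    unfolding f_n_eq_comp_prod using assms
    by (intro comp_prod_anticommute[where b = a]) (simp_all add: additive Psi_psi_comm del: upt_Suc)
  show "PsiS a (f_n v) = - f_n (PsiS a v)"
    unfolding f_n_eq_comp_prod using assms
    by (intro comp_prod_anticommute[where b = a]) (simp_all add: additive PsiS_psi_comm del: upt_Suc)
  show "Om a (f_n v) = f_n (Om a v)"
    unfolding f_n_eq_comp_prod
    using assms by (intro comp_prod_commute) (simp add: Om_psi_comm del: upt_Suc)
  show "OmI a (f_n v) = f_n (OmI a v)"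
    unfolding f_n_eq_comp_prod
    using assms by (intro comp_prod_commute) (simp add: OmI_psi_comm del: upt_Suc)
qed

lemma cl_even_cl_odd_imp_cl_expr:
  "cl_even n e \<Longrightarrow> cl_expr n e" "cl_odd n e \<Longrightarrow> cl_expr n e"
  by (induction rule: cl_even_cl_odd.inducts) (auto intro: cl_expr.intros)

lemma linear_cl_eval: "cl_expr n e \<Longrightarrow> Vector_Spaces.linear sc sc (\<pi> e)"
proof (induction rule: cl_expr.induct)
  case 5
  show ?case
    using V.linear_ident by (simp add: id_def)
next
  case (6 e c)
  then show ?case
    by (simp add: VP.linear_compose_scale_right)
next
  case (7 e1 e2)
  then show ?case
    by (simp add: VP.linear_compose_add)
next
  case (8 e1 e2)
  then show ?case
    using Vector_Spaces.linear_compose[of sc sc "\<pi> e2" sc "\<pi> e1"] by (simp add: comp_def)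
qed (simp_all add: linear_generators)

lemma cl_eval_f_n_parity:
  "cl_even n e \<Longrightarrow> \<pi> e (f_n v) = f_n (\<pi> e v)"
  "cl_odd n e \<Longrightarrow> \<pi> e (f_n v) = - f_n (\<pi> e v)"
proof (induction arbitrary: v and v rule: cl_even_cl_odd.inducts)
  case (6 e c)
  then show ?case
    by (simp add: VP.linear_scale[OF linear_f_n])
next
  case (7 e c)
  then show ?case
    by (simp add: VP.linear_scale[OF linear_f_n])
next
  case (11 e1 e2)
  then have "Vector_Spaces.linear sc sc (\<pi> e1)"
    using cl_even_cl_odd_imp_cl_expr linear_cl_eval by blast
  with 11 show ?case
    by (simp add: VP.linear_neg)
next
  case (12 e1 e2)
  then have "Vector_Spaces.linear sc sc (\<pi> e1)"
    using cl_even_cl_odd_imp_cl_expr linear_cl_eval by blast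
  with 12 show ?case
    by (simp add: VP.linear_neg)
qed (simp_all add: generators_f_n VP.linear_add[OF linear_f_n])

end

theorem proposition4p7:
  fixes sc :: "'k::field \<Rightarrow> 'v::ab_group_add \<Rightarrow> 'v"
    and q :: 'k and n k :: nat
    and Psi PsiS Om OmI :: "nat \<Rightarrow> 'v \<Rightarrow> 'v"
  assumes char: "(2::'k) \<noteq> 0"
    and q: "q \<noteq> 0"
    and n: "n > 0" and k: "k > 0"
    and rep: "qcl_rep sc q n k Psi PsiS Om OmI"
    and irr: "qcl_irreducible sc n Psi PsiS Om OmI"
  defines "Wp \<equiv> range (\<lambda>v. v + qcl_fn n Psi PsiS v)"
    and "Wm \<equiv> range (\<lambda>v. v - qcl_fn n Psi PsiS v)"
  shows "(\<forall>w. \<exists>x\<in>Wp. \<exists>y\<in>Wm. w = x + y) \<and> Wp \<inter> Wm = {0}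
       \<and> (\<forall>e. cl_even n e \<longrightarrow> cl_eval sc Psi PsiS Om OmI e ` Wp \<subseteq> Wp
                           \<and> cl_eval sc Psi PsiS Om OmI e ` Wm \<subseteq> Wm)"
proof -
  interpret qcl_representation sc q n k Psi PsiS Om OmI
    using rep char q by unfold_locales
  have additive_f_n: "additive f_n"
    using linear_f_n by (rule linear_imp_additive)
  have "cl_eval sc Psi PsiS Om OmI e ` Wp \<subseteq> Wp \<and> cl_eval sc Psi PsiS Om OmI e ` Wm \<subseteq> Wm"
    if "cl_even n e" for e
  proof -
    have "additive (\<pi> e)"
      using that cl_even_cl_odd_imp_cl_expr(1) linear_cl_eval linear_imp_additive by blast
    with cl_eval_f_n_parity(1)[OF that] show ?thesis
      unfolding Wp_def Wm_def by (simp add: commuting_map_preserves_ranges)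
  qed
  with V.ranges_plus_minus_sum[OF char] V.involution_ranges_inter[OF char additive_f_n f_n_involutive]
  show ?thesis
    unfolding Wp_def Wm_def by blast
qed

end
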